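(* Let $b_1,b_2,b_3\in\mathbb R$, not all zero, with $b_1+b_2+b_3=0$. Set \[a_1=\tfrac1{\sqrt3}(b_3-b_2),\quad a_2=\tfrac1{\sqrt3}(b_1-b_3),\quad a_3=\tfrac1{\sqrt3}(b_2-b_1).\] Let $w_1,w_2,w_3:\mathbb R\to\mathbb C\setminus\{0\}$ be differentiable functions satisfying, for all $t$, \[\frac{dw_1}{dt}=a_1\overline{w_2w_3},\quad\frac{dw_2}{dt}=a_2\overline{w_3w_1},\quad\frac{dw_3}{dt}=a_3\overline{w_1w_2},\] \[|w_1|^2+|w_2|^2+|w_3|^2=3,\qquad b_1|w_1|^2+b_2|w_2|^2+b_3|w_3|^2=0.\] Define $\Phi:\mathbb R^2\to\mathcal S^5$ by \[\Phi(s,t)=\tfrac1{\sqrt3}\bigl(e^{ib_1s}w_1(t),e^{ib_2s}w_2(t),e^{ib_3s}w_3(t)\bigr).\] Then $\Phi$ is a conformal harmonic map.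
   Context: $\mathcal S^5$ is the unit sphere in $\mathbb C^3$ with the round metric. Conformal means that $\partial\Phi/\partial s$ and $\partial\Phi/\partial t$ are orthogonal and of equal length at every point. *)

theory Defs
  imports "HOL-Analysis.Analysis"
begin

text \<open>Maps R^2 -> C^3 are written curried, Phi s t.  C^3 = complex^3 carries the
real inner product Re <u,v> (the round/Euclidean metric of R^6).\<close>

definition has_partials ::
  "(real \<Rightarrow> real \<Rightarrow> complex^3) \<Rightarrow> (real \<Rightarrow> real \<Rightarrow> complex^3) \<Rightarrow> (real \<Rightarrow> real \<Rightarrow> complex^3) \<Rightarrow> bool"
where "has_partials F Fs Ft \<longleftrightarrow>
   (\<forall>s t. ((\<lambda>s'. F s' t) has_vector_derivative Fs s t) (at s) \<and>
          ((\<lambda>t'. F s t') has_vector_derivative Ft s t) (at t))"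

definition conformal_map :: "(real \<Rightarrow> real \<Rightarrow> complex^3) \<Rightarrow> bool" where
  "conformal_map F \<longleftrightarrow> (\<exists>Fs Ft. has_partials F Fs Ft \<and>
     (\<forall>s t. inner (Fs s t) (Ft s t) = 0 \<and> norm (Fs s t) = norm (Ft s t)))"

text \<open>Harmonic map R^2 -> S^5 (C^2 map into the unit sphere whose tension field,
the tangential part of the Laplacian, vanishes).\<close>
definition harmonic_map_S5 :: "(real \<Rightarrow> real \<Rightarrow> complex^3) \<Rightarrow> bool" where
  "harmonic_map_S5 F \<longleftrightarrow> (\<forall>s t. norm (F s t) = 1) \<and>
   (\<exists>Fs Ft Fss Fst Fts Ftt. has_partials F Fs Ft \<and> has_partials Fs Fss Fst \<and> has_partials Ft Fts Ftt \<and>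
      continuous_on UNIV (\<lambda>(s,t). Fs s t) \<and> continuous_on UNIV (\<lambda>(s,t). Ft s t) \<and>
      continuous_on UNIV (\<lambda>(s,t). Fss s t) \<and> continuous_on UNIV (\<lambda>(s,t). Fst s t) \<and>
      continuous_on UNIV (\<lambda>(s,t). Fts s t) \<and> continuous_on UNIV (\<lambda>(s,t). Ftt s t) \<and>
      (\<forall>s t. let L = Fss s t + Ftt s t in L - inner L (F s t) *\<^sub>R F s t = 0))"

end

theory Submission
  imports Defs
begin

text \<open>
  Phi is the orbit of the curve gamma = (w1, w2, w3) / sqrt 3 under the one-parameter subgroup
  exp (i s B), B = diag (b1, b2, b3), of the torus acting isometrically on C^3. Hence
  Phi_s = exp (i s B) (i B gamma) and Phi_t = exp (i s B) gamma', and conformality reduces to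
  Re <i B gamma, gamma'> = 0 and |B gamma| = |gamma'| along the curve: by the ODE the first is
  b1 a1 + b2 a2 + b3 a3 = 0, the second follows from the two conservation laws. Differentiating
  the ODE once more gives wk'' = mk wk with real mk, so the Laplacian of Phi has components
  (mk - bk^2) Phi_k; the conservation laws make mk - bk^2 independent of k, so the Laplacian is
  normal to the sphere and the tension field vanishes.
\<close>

lemma bounded_linear_axis: "bounded_linear (axis i :: 'a::real_normed_vector \<Rightarrow> 'a^'n)"
proof (rule bounded_linear_intro[where K = 1])
  show "norm (axis i x :: 'a^'n) \<le> norm x * 1" for x
    by (simp add: norm_vec_def L2_set_def axis_def if_distrib[of norm]
        if_distrib[of "\<lambda>y. y\<^sup>2"] cong: if_cong)
qed (simp_all add: axis_def vec_eq_iff)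

lemma has_vector_derivative_vec_lambda:
  fixes f :: "'n::finite \<Rightarrow> real \<Rightarrow> 'a::real_normed_vector"
  assumes "\<And>i. (f i has_vector_derivative f' i) F"
  shows "((\<lambda>x. \<chi> i. f i x) has_vector_derivative (\<chi> i. f' i)) F"
proof -
  have sum_axis: "(\<chi> i. g i) = (\<Sum>i\<in>UNIV. axis i (g i) :: 'a^'n)" for g :: "'n \<Rightarrow> 'a"
    by (simp add: vec_eq_iff axis_def cong: if_cong)
  show ?thesis
    unfolding sum_axis
    by (intro has_vector_derivative_sum bounded_linear.has_vector_derivative[OF bounded_linear_axis] assms)
qed

lemma has_vector_derivative_imp_continuous_on:
  assumes "\<And>t. (f has_vector_derivative f' t) (at t)"
  shows "continuous_on UNIV f"
  using assms by (meson continuous_at_imp_continuous_on has_vector_derivative_continuous)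

lemma has_vector_derivative_vector3:
  assumes "(f1 has_vector_derivative f1') F" "(f2 has_vector_derivative f2') F"
    "(f3 has_vector_derivative f3') F"
  shows "((\<lambda>x. vector [f1 x, f2 x, f3 x] :: 'a::real_normed_vector^3)
           has_vector_derivative vector [f1', f2', f3']) F"
proof -
  have "((\<lambda>x. vector [f1 x, f2 x, f3 x] $ i) has_vector_derivative
          (vector [f1', f2', f3'] :: 'a^3) $ i) F"
    for i :: 3
    using exhaust_3[of i] assms by auto
  then have "((\<lambda>x. \<chi> i. vector [f1 x, f2 x, f3 x] $ i) has_vector_derivative
               (\<chi> i. (vector [f1', f2', f3'] :: 'a^3) $ i)) F"
    by (rule has_vector_derivative_vec_lambda)
  then show ?thesis
    by simp
qed

lemma continuous_on_vector3:
  assumes "continuous_on S f1" "continuous_on S f2" "continuous_on S f3"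
  shows "continuous_on S (\<lambda>x. vector [f1 x, f2 x, f3 x] :: 'a::{zero,topological_space}^3)"
proof -
  have "continuous_on S (\<lambda>x. vector [f1 x, f2 x, f3 x] $ i :: 'a)" for i :: 3
    using exhaust_3[of i] assms by auto
  then have "continuous_on S (\<lambda>x. \<chi> i. vector [f1 x, f2 x, f3 x] $ i :: 'a^3)"
    by (rule continuous_on_vec_lambda)
  then show ?thesis
    by simp
qed

lemma inner_vector3:
  "inner (vector [x1, x2, x3] :: complex^3) (vector [y1, y2, y3]) =
     Re (cnj x1 * y1) + Re (cnj x2 * y2) + Re (cnj x3 * y3)"
  by (simp add: inner_vec_def sum_3 inner_complex_def)

lemma norm_vector3_squared:
  "(norm (vector [x1, x2, x3] :: complex^3))\<^sup>2 = (cmod x1)\<^sup>2 + (cmod x2)\<^sup>2 + (cmod x3)\<^sup>2"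
  by (simp add: norm_vec_def L2_set_def sum_3 sum_nonneg)

lemma tangential_part_radial:
  fixes x :: "'a::real_inner"
  assumes "norm x = 1"
  shows "r *\<^sub>R x - inner (r *\<^sub>R x) x *\<^sub>R x = 0"
  using assms by (simp add: power2_norm_eq_inner[symmetric])

definition torus_rot :: "real^'n \<Rightarrow> real \<Rightarrow> complex^'n \<Rightarrow> complex^'n" where
  "torus_rot b s z = (\<chi> k. cis (b $ k * s) * z $ k)"

definition torus_gen :: "real^'n \<Rightarrow> complex^'n \<Rightarrow> complex^'n" where
  "torus_gen b z = (\<chi> k. \<i> * of_real (b $ k) * z $ k)"

lemma bounded_linear_torus_rot: "bounded_linear (torus_rot b s)"
proof -
  have "linear (torus_rot b s)"
    by (rule linearI) (simp_all add: torus_rot_def vec_eq_iff algebra_simps)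
  then show ?thesis
    by (simp add: linear_conv_bounded_linear)
qed

lemma bounded_linear_torus_gen: "bounded_linear (torus_gen b)"
proof -
  have "linear (torus_gen b)"
    by (rule linearI) (simp_all add: torus_gen_def vec_eq_iff algebra_simps)
  then show ?thesis
    by (simp add: linear_conv_bounded_linear)
qed

lemma torus_gen_scaleR: "torus_gen b (r *\<^sub>R z) = r *\<^sub>R torus_gen b z"
  using bounded_linear_torus_gen bounded_linear.linear linear_scale by blast

lemma inner_torus_rot: "inner (torus_rot b s x) (torus_rot b s y) = inner x y"
proof -
  have "inner (cis \<theta> * u) (cis \<theta> * v) = inner u v" for \<theta> and u v :: complex
    by (simp add: inner_complex_def algebra_simps) (simp flip: distrib_left add: power2_eq_square[symmetric])
  then show ?thesis
    by (simp add: torus_rot_def inner_vec_def)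
qed

lemma norm_torus_rot: "norm (torus_rot b s x) = norm x"
  by (simp add: norm_eq_sqrt_inner inner_torus_rot)

lemma has_vector_derivative_torus_rot:
  "((\<lambda>s. torus_rot b s z) has_vector_derivative torus_rot b s (torus_gen b z)) (at s)"
proof -
  have "((\<lambda>s. cis (\<beta> * s) * u) has_vector_derivative
          cis (\<beta> * s) * (\<i> * of_real \<beta> * u)) (at s)"
    for \<beta> u
    unfolding has_vector_derivative_def
    by (auto intro!: derivative_eq_intros simp: algebra_simps scaleR_conv_of_real)
  then show ?thesis
    unfolding torus_rot_def torus_gen_def
    by (auto intro!: has_vector_derivative_vec_lambda)
qed

lemma has_partials_torus_orbit:
  assumes "\<And>t. (\<gamma> has_vector_derivative \<gamma>' t) (at t)"
  shows "has_partials (\<lambda>s t. torus_rot b s (\<gamma> t))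
           (\<lambda>s t. torus_rot b s (torus_gen b (\<gamma> t))) (\<lambda>s t. torus_rot b s (\<gamma>' t))"
  unfolding has_partials_def
  by (intro allI conjI has_vector_derivative_torus_rot
      bounded_linear.has_vector_derivative[OF bounded_linear_torus_rot] assms)

lemma continuous_on_torus_orbit:
  assumes "continuous_on UNIV \<gamma>"
  shows "continuous_on UNIV (\<lambda>(s, t). torus_rot b s (\<gamma> t))"
proof -
  have "continuous_on UNIV (\<lambda>p. \<gamma> (snd p))"
    by (rule continuous_on_compose2[OF assms continuous_on_snd]) auto
  then show ?thesis
    unfolding torus_rot_def case_prod_beta
    by (intro continuous_intros)
qed

lemma conformal_map_torus_orbit:
  fixes \<gamma> :: "real \<Rightarrow> complex^3"
  assumes "\<And>t. (\<gamma> has_vector_derivative \<gamma>' t) (at t)"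
    and "\<And>t. inner (torus_gen b (\<gamma> t)) (\<gamma>' t) = 0"
    and "\<And>t. norm (torus_gen b (\<gamma> t)) = norm (\<gamma>' t)"
  shows "conformal_map (\<lambda>s t. torus_rot b s (\<gamma> t))"
  unfolding conformal_map_def
  using has_partials_torus_orbit[OF assms(1), of b] assms(2,3)
  by (fastforce simp: inner_torus_rot norm_torus_rot)

lemma harmonic_map_S5_torus_orbit:
  fixes \<gamma> :: "real \<Rightarrow> complex^3"
  assumes \<gamma>': "\<And>t. (\<gamma> has_vector_derivative \<gamma>' t) (at t)"
    and \<gamma>'': "\<And>t. (\<gamma>' has_vector_derivative \<gamma>'' t) (at t)"
    and "continuous_on UNIV \<gamma>''"
    and "\<And>t. norm (\<gamma> t) = 1"
    and "\<And>t. torus_gen b (torus_gen b (\<gamma> t)) + \<gamma>'' t = c t *\<^sub>R \<gamma> t"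
  shows "harmonic_map_S5 (\<lambda>s t. torus_rot b s (\<gamma> t))"
proof -
  note gen = bounded_linear_torus_gen[of b]
  have cont_\<gamma>: "continuous_on UNIV \<gamma>" and cont_\<gamma>': "continuous_on UNIV \<gamma>'"
    by (rule has_vector_derivative_imp_continuous_on, fact)+
  define Fs where "Fs s t = torus_rot b s (torus_gen b (\<gamma> t))" for s t
  define Ft where "Ft s t = torus_rot b s (\<gamma>' t)" for s t
  define Fss where "Fss s t = torus_rot b s (torus_gen b (torus_gen b (\<gamma> t)))" for s t
  define Fst where "Fst s t = torus_rot b s (torus_gen b (\<gamma>' t))" for s t
  define Ftt where "Ftt s t = torus_rot b s (\<gamma>'' t)" for s t
  have partials_\<Phi>: "has_partials (\<lambda>s t. torus_rot b s (\<gamma> t)) Fs Ft"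
    unfolding Fs_def Ft_def by (rule has_partials_torus_orbit[OF \<gamma>'])
  have partials_Fs: "has_partials Fs Fss Fst"
    unfolding Fs_def Fss_def Fst_def
    by (intro has_partials_torus_orbit bounded_linear.has_vector_derivative[OF gen] \<gamma>')
  have partials_Ft: "has_partials Ft Fst Ftt"
    unfolding Ft_def Fst_def Ftt_def by (rule has_partials_torus_orbit[OF \<gamma>''])
  have cont_gen: "continuous_on UNIV (\<lambda>t. torus_gen b (f t))" if "continuous_on UNIV f" for f
    using continuous_on_compose[OF that linear_continuous_on[OF gen]] by (simp add: o_def)
  have continuous: "continuous_on UNIV (\<lambda>(s, t). Fs s t)" "continuous_on UNIV (\<lambda>(s, t). Ft s t)"
    "continuous_on UNIV (\<lambda>(s, t). Fss s t)" "continuous_on UNIV (\<lambda>(s, t). Fst s t)"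
    "continuous_on UNIV (\<lambda>(s, t). Ftt s t)"
    unfolding Fs_def Ft_def Fss_def Fst_def Ftt_def
    by (intro continuous_on_torus_orbit cont_gen cont_\<gamma> cont_\<gamma>' assms(3))+
  have tension: "L - inner L (torus_rot b s (\<gamma> t)) *\<^sub>R torus_rot b s (\<gamma> t) = 0"
    if "L = Fss s t + Ftt s t" for L s t
  proof -
    have rot: "linear (torus_rot b s)"
      using bounded_linear_torus_rot bounded_linear.linear by blast
    have "L = c t *\<^sub>R torus_rot b s (\<gamma> t)"
      unfolding that Fss_def Ftt_def
      by (simp only: linear_add[OF rot, symmetric] assms(5) linear_scale[OF rot])
    then show ?thesis
      using tangential_part_radial assms(4) norm_torus_rot by metis
  qed
  show ?thesis
    unfolding harmonic_map_S5_def Let_def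
    using partials_\<Phi> partials_Fs partials_Ft continuous tension
    by (simp add: norm_torus_rot assms(4)) blast
qed

lemma has_vector_derivative_cyclic_velocity:
  fixes a b c :: real and u v w :: "real \<Rightarrow> complex"
  assumes "(v has_vector_derivative of_real b * cnj (w t * u t)) (at t)"
    and "(w has_vector_derivative of_real c * cnj (u t * v t)) (at t)"
  shows "((\<lambda>t. of_real a * cnj (v t * w t)) has_vector_derivative
           of_real (a * (b * (cmod (w t))\<^sup>2 + c * (cmod (v t))\<^sup>2)) * u t) (at t)"
proof -
  have "((\<lambda>t. of_real a * cnj (v t * w t)) has_vector_derivative
          of_real a * cnj (v t * (of_real c * cnj (u t * v t)) + of_real b * cnj (w t * u t) * w t)) (at t)"
    by (intro has_vector_derivative_mult_right has_vector_derivative_cnj has_vector_derivative_mult assms)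
  also have "of_real a * cnj (v t * (of_real c * cnj (u t * v t)) + of_real b * cnj (w t * u t) * w t)
      = of_real a * (of_real c * (cnj (v t) * v t) + of_real b * (cnj (w t) * w t)) * u t"
    by (simp add: algebra_simps)
  also have "\<dots> = of_real (a * (b * (cmod (w t))\<^sup>2 + c * (cmod (v t))\<^sup>2)) * u t"
    by (simp add: mult.commute[of "cnj _"] flip: complex_norm_square)
  finally show ?thesis .
qed

lemma cyclic_norm_identity:
  fixes a1 a2 a3 b1 b2 b3 X1 X2 X3 :: real
  assumes "a1 = (b3 - b2) / sqrt 3" "a2 = (b1 - b3) / sqrt 3" "a3 = (b2 - b1) / sqrt 3"
    and "X1 + X2 + X3 = 3" "b1 * X1 + b2 * X2 + b3 * X3 = 0"
  shows "b1\<^sup>2 * X1 + b2\<^sup>2 * X2 + b3\<^sup>2 * X3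
           = a1\<^sup>2 * X2 * X3 + a2\<^sup>2 * X3 * X1 + a3\<^sup>2 * X1 * X2"
proof -
  have "3 * (b1\<^sup>2 * X1 + b2\<^sup>2 * X2 + b3\<^sup>2 * X3)
      - ((b3 - b2)\<^sup>2 * X2 * X3 + (b1 - b3)\<^sup>2 * X3 * X1 + (b2 - b1)\<^sup>2 * X1 * X2)
      = (3 - (X1 + X2 + X3)) * (b1\<^sup>2 * X1 + b2\<^sup>2 * X2 + b3\<^sup>2 * X3)
        + (b1 * X1 + b2 * X2 + b3 * X3)\<^sup>2"
    by (simp add: algebra_simps power2_eq_square)
  then show ?thesis
    using assms by (simp add: power_divide)
qed

lemma cyclic_eigenvalue_eq:
  fixes a1 a2 a3 b1 b2 b3 X1 X2 X3 :: real
  assumes "a1 = (b3 - b2) / sqrt 3" "a2 = (b1 - b3) / sqrt 3" "a3 = (b2 - b1) / sqrt 3"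
    and "b1 + b2 + b3 = 0" "X1 + X2 + X3 = 3" "b1 * X1 + b2 * X2 + b3 * X3 = 0"
  shows "a1 * (a2 * X3 + a3 * X2) - b1\<^sup>2 = a2 * (a3 * X1 + a1 * X3) - b2\<^sup>2"
proof -
  have b3: "b3 = - b1 - b2"
    using assms(4) by simp
  have "3 * ((a1 * (a2 * X3 + a3 * X2) - b1\<^sup>2) - (a2 * (a3 * X1 + a1 * X3) - b2\<^sup>2))
      = (b3 - b2) * ((b1 - b3) * X3 + (b2 - b1) * X2) - 3 * b1\<^sup>2
        - ((b1 - b3) * ((b2 - b1) * X1 + (b3 - b2) * X3) - 3 * b2\<^sup>2)"
    unfolding assms(1-3) by (simp add: field_simps power2_eq_square)
  also have "\<dots> = (b1 - b2) * (b1 * X1 + b2 * X2 + b3 * X3) + (X1 + X2 + X3 - 3) * (b1\<^sup>2 - b2\<^sup>2)"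
    unfolding b3 by (simp add: algebra_simps power2_eq_square)
  finally show ?thesis
    using assms(5,6) by simp
qed

locale cyclic_system =
  fixes a1 a2 a3 :: real and w1 w2 w3 :: "real \<Rightarrow> complex"
  assumes w1_deriv: "\<And>t. (w1 has_vector_derivative of_real a1 * cnj (w2 t * w3 t)) (at t)"
    and w2_deriv: "\<And>t. (w2 has_vector_derivative of_real a2 * cnj (w3 t * w1 t)) (at t)"
    and w3_deriv: "\<And>t. (w3 has_vector_derivative of_real a3 * cnj (w1 t * w2 t)) (at t)"
begin

definition curve :: "real \<Rightarrow> complex^3" where
  "curve t = vector [w1 t, w2 t, w3 t]"

definition velocity :: "real \<Rightarrow> complex^3" where
  "velocity t = vector [of_real a1 * cnj (w2 t * w3 t), of_real a2 * cnj (w3 t * w1 t),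
     of_real a3 * cnj (w1 t * w2 t)]"

definition acceleration :: "real \<Rightarrow> complex^3" where
  "acceleration t = vector
     [of_real (a1 * (a2 * (cmod (w3 t))\<^sup>2 + a3 * (cmod (w2 t))\<^sup>2)) * w1 t,
      of_real (a2 * (a3 * (cmod (w1 t))\<^sup>2 + a1 * (cmod (w3 t))\<^sup>2)) * w2 t,
      of_real (a3 * (a1 * (cmod (w2 t))\<^sup>2 + a2 * (cmod (w1 t))\<^sup>2)) * w3 t]"

lemma has_vector_derivative_curve: "(curve has_vector_derivative velocity t) (at t)"
  unfolding curve_def[abs_def] velocity_def
  by (intro has_vector_derivative_vector3 w1_deriv w2_deriv w3_deriv)

lemma has_vector_derivative_velocity: "(velocity has_vector_derivative acceleration t) (at t)"
  unfolding velocity_def[abs_def] acceleration_def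
  by (intro has_vector_derivative_vector3 has_vector_derivative_cyclic_velocity
      w1_deriv w2_deriv w3_deriv)

lemma continuous_on_acceleration: "continuous_on UNIV acceleration"
proof -
  have "continuous_on UNIV w1" "continuous_on UNIV w2" "continuous_on UNIV w3"
    by (rule has_vector_derivative_imp_continuous_on, rule w1_deriv w2_deriv w3_deriv)+
  then show ?thesis
    unfolding acceleration_def[abs_def]
    by (intro continuous_on_vector3 continuous_intros)
qed

end

locale balanced_cyclic_system = cyclic_system +
  fixes b1 b2 b3 :: real
  assumes b_sum: "b1 + b2 + b3 = 0"
    and a1_eq: "a1 = (b3 - b2) / sqrt 3"
    and a2_eq: "a2 = (b1 - b3) / sqrt 3"
    and a3_eq: "a3 = (b2 - b1) / sqrt 3"
    and mass: "\<And>t. (cmod (w1 t))\<^sup>2 + (cmod (w2 t))\<^sup>2 + (cmod (w3 t))\<^sup>2 = 3"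
    and moment: "\<And>t. b1 * (cmod (w1 t))\<^sup>2 + b2 * (cmod (w2 t))\<^sup>2 + b3 * (cmod (w3 t))\<^sup>2 = 0"
begin

abbreviation weights :: "real^3" where
  "weights \<equiv> vector [b1, b2, b3]"

lemma torus_gen_curve:
  "torus_gen weights (curve t)
     = vector [\<i> * of_real b1 * w1 t, \<i> * of_real b2 * w2 t, \<i> * of_real b3 * w3 t]"
  by (simp add: torus_gen_def curve_def vec_eq_iff forall_3)

lemma norm_curve: "norm (curve t) = sqrt 3"
proof -
  have "(norm (curve t))\<^sup>2 = 3"
    using mass[of t] by (simp add: curve_def norm_vector3_squared)
  then show ?thesis
    by (metis norm_ge_zero real_sqrt_unique)
qed

lemma inner_torus_gen_curve_velocity: "inner (torus_gen weights (curve t)) (velocity t) = 0"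
proof -
  have "b1 * a1 + b2 * a2 + b3 * a3 = 0"
    by (simp add: a1_eq a2_eq a3_eq field_simps)
  then have "(- \<i>) * of_real (b1 * a1 + b2 * a2 + b3 * a3) * cnj (w1 t * w2 t * w3 t) = 0"
    by simp
  then show ?thesis
    unfolding torus_gen_curve velocity_def inner_vector3
    by (simp add: algebra_simps)
qed

lemma norm_torus_gen_curve: "norm (torus_gen weights (curve t)) = norm (velocity t)"
proof -
  have "(norm (torus_gen weights (curve t)))\<^sup>2 = (norm (velocity t))\<^sup>2"
    unfolding torus_gen_curve velocity_def norm_vector3_squared
    using cyclic_norm_identity[OF a1_eq a2_eq a3_eq mass moment, of t]
    by (simp add: norm_mult power_mult_distrib algebra_simps)
  then show ?thesis
    by (simp add: power2_eq_iff_nonneg)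
qed

lemma torus_gen_torus_gen_curve_add_acceleration:
  "torus_gen weights (torus_gen weights (curve t)) + acceleration t
     = (a1 * (a2 * (cmod (w3 t))\<^sup>2 + a3 * (cmod (w2 t))\<^sup>2) - b1\<^sup>2) *\<^sub>R curve t"
proof -
  have shift12: "a1 * (a2 * (cmod (w3 t))\<^sup>2 + a3 * (cmod (w2 t))\<^sup>2) - b1\<^sup>2
      = a2 * (a3 * (cmod (w1 t))\<^sup>2 + a1 * (cmod (w3 t))\<^sup>2) - b2\<^sup>2"
    by (rule cyclic_eigenvalue_eq[where ?b3.0 = b3])
      (use a1_eq a2_eq a3_eq b_sum mass moment in simp_all)
  have shift23: "a2 * (a3 * (cmod (w1 t))\<^sup>2 + a1 * (cmod (w3 t))\<^sup>2) - b2\<^sup>2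
      = a3 * (a1 * (cmod (w2 t))\<^sup>2 + a2 * (cmod (w1 t))\<^sup>2) - b3\<^sup>2"
    by (rule cyclic_eigenvalue_eq[where ?b3.0 = b1])
      (use a1_eq a2_eq a3_eq b_sum mass[of t] moment[of t] in \<open>simp_all add: ac_simps\<close>)
  have component: "\<i> * of_real \<beta> * (\<i> * of_real \<beta> * z) + of_real m * z = (m - \<beta>\<^sup>2) *\<^sub>R z"
    for \<beta> m :: real and z :: complex
    by (simp add: algebra_simps power2_eq_square scaleR_conv_of_real)
  show ?thesis
    unfolding vec_eq_iff forall_3 torus_gen_curve
    by (simp only: torus_gen_def curve_def acceleration_def vec_lambda_beta vector_3
        vector_add_component vector_scaleR_component component shift12 shift23)
qed

end

theorem proposition8p3:
  fixes b1 b2 b3 :: real and w1 w2 w3 :: "real \<Rightarrow> complex"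
  assumes "\<not> (b1 = 0 \<and> b2 = 0 \<and> b3 = 0)" and "b1 + b2 + b3 = 0"
    and "a1 = (b3 - b2) / sqrt 3" and "a2 = (b1 - b3) / sqrt 3" and "a3 = (b2 - b1) / sqrt 3"
    and "\<And>t. w1 t \<noteq> 0 \<and> w2 t \<noteq> 0 \<and> w3 t \<noteq> 0"
    and "\<And>t. (w1 has_vector_derivative (complex_of_real a1 * cnj (w2 t * w3 t))) (at t)"
    and "\<And>t. (w2 has_vector_derivative (complex_of_real a2 * cnj (w3 t * w1 t))) (at t)"
    and "\<And>t. (w3 has_vector_derivative (complex_of_real a3 * cnj (w1 t * w2 t))) (at t)"
    and "\<And>t. (cmod (w1 t))\<^sup>2 + (cmod (w2 t))\<^sup>2 + (cmod (w3 t))\<^sup>2 = 3"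
    and "\<And>t. b1 * (cmod (w1 t))\<^sup>2 + b2 * (cmod (w2 t))\<^sup>2 + b3 * (cmod (w3 t))\<^sup>2 = 0"
    and "\<And>s t. Phi s t = vector [complex_of_real (1 / sqrt 3) * exp (\<i> * complex_of_real (b1 * s)) * w1 t,
                                  complex_of_real (1 / sqrt 3) * exp (\<i> * complex_of_real (b2 * s)) * w2 t,
                                  complex_of_real (1 / sqrt 3) * exp (\<i> * complex_of_real (b3 * s)) * w3 t]"
  shows "conformal_map Phi \<and> harmonic_map_S5 Phi"
proof -
  interpret balanced_cyclic_system a1 a2 a3 w1 w2 w3 b1 b2 b3
    using assms(2-5,7-11) by unfold_locales auto
  define \<gamma> where "\<gamma> t = (1 / sqrt 3) *\<^sub>R curve t" for t
  have Phi_eq: "Phi = (\<lambda>s t. torus_rot weights s (\<gamma> t))"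
    using scaleR_conv_of_real[where 'a = complex]
    by (intro ext) (simp add: assms(12) \<gamma>_def curve_def torus_rot_def vec_eq_iff forall_3
        cis_conv_exp mult_ac)
  have \<gamma>': "(\<gamma> has_vector_derivative (1 / sqrt 3) *\<^sub>R velocity t) (at t)" for t
    unfolding \<gamma>_def[abs_def]
    by (intro bounded_linear.has_vector_derivative[OF bounded_linear_scaleR_right]
        has_vector_derivative_curve)
  have \<gamma>'': "((\<lambda>t. (1 / sqrt 3) *\<^sub>R velocity t) has_vector_derivative
                (1 / sqrt 3) *\<^sub>R acceleration t) (at t)" for t
    by (intro bounded_linear.has_vector_derivative[OF bounded_linear_scaleR_right]
        has_vector_derivative_velocity)
  have "conformal_map Phi"
    unfolding Phi_eq
    by (rule conformal_map_torus_orbit[OF \<gamma>'])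
      (simp_all add: \<gamma>_def torus_gen_scaleR inner_torus_gen_curve_velocity norm_torus_gen_curve)
  moreover have "harmonic_map_S5 Phi"
    unfolding Phi_eq
    by (rule harmonic_map_S5_torus_orbit[OF \<gamma>' \<gamma>'',
          where c = "\<lambda>t. a1 * (a2 * (cmod (w3 t))\<^sup>2 + a3 * (cmod (w2 t))\<^sup>2) - b1\<^sup>2"])
      (simp_all add: \<gamma>_def torus_gen_scaleR norm_curve continuous_on_acceleration continuous_intros
        torus_gen_torus_gen_curve_add_acceleration flip: scaleR_add_right)
  ultimately show ?thesis ..
qed

end
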